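(* Let $V$ be a crossed module and $M$ an abelian $\pi_0(V)$-module. The map $z\mapsto(z_M,z_G)$ is an isomorphism of abelian groups from $Z^2(V,M)$ onto \[\{(c_1,z_0)\in \mathrm{Map}(M_V,M)\times Z^2(G_V,M):\ c_1(nm)=c_1(n)+c_1(m)-z_0(\mu(n),\mu(m)),\ c_1({}^gm)=\bar g\cdot c_1(m)+z_0(\mu({}^gm),g)-z_0(g,\mu(m))\ \forall m,n\in M_V,g\in G_V\}.\] Equivalently, $Z^2(V,M)$ together with $z\mapsto z_M$ and $z\mapsto z_G$ is the pullback of the homomorphisms $\mathrm{Map}(M_V,M)\to C^2(M_V,M)\times \mathrm{Map}(M_V\times G_V,M)$, $c_1\mapsto(dc_1,\alpha_1(c_1))$, and $Z^2(G_V,M)\to C^2(M_V,M)\times\mathrm{Map}(M_V\times G_V,M)$, $c_0\mapsto(c_0\circ(\mu\times\mu),\alpha_0(c_0))$, where $M$ is a trivial $M_V$-module, $\alpha_1(c_1)(m,g)=c_1({}^gm)-\bar g\cdot c_1(m)$ and $\alpha_0(c_0)(m,g)=c_0(\mu({}^gm),g)-c_0(g,\mu(m))$.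
   Context: Crossed module $V$: group $G_V$, group $M_V$ with left $G_V$-action ${}^gm$, homomorphism $\mu:M_V\to G_V$ with $\mu({}^gm)=g\mu(m)g^{-1}$, ${}^{\mu(n)}m=nmn^{-1}$; $\pi_0(V)=G_V/\mu(M_V)$, $\bar g$ the class of $g$. Cochains of $V$: $C^2(V,M)=\mathrm{Map}(M_V\times G_V\times G_V,M)$, and $d:C^2(V,M)\to C^3(V,M)=\mathrm{Map}(M_V\times M_V\times G_V\times M_V\times G_V\times G_V,M)$ is $(dc)(p,n,k,m,h,g)=c(p,\mu(n)k,\mu(m)h)-c(pn,k,hg)+c(n\,{}^km,kh,g)-\bar k\cdot c(m,h,g)$; $Z^2(V,M)=\ker d$. Module part $z_M(m):=z(m,1,1)$, group part $z_G(h,g):=z(1,h,g)$. Group cochains for a group $\Pi$ acting on $A$: $C^n(\Pi,A)=\mathrm{Map}(\Pi^n,A)$, $(dc)(h)$ on $C^1$: $(dc)(h,g)=c(h)-c(hg)+h\cdot c(g)$; on $C^2$: $(dc)(r,q,p)=c(r,q)-c(r,qp)+c(rq,p)-r\cdot c(q,p)$; $G_V$ acts on $M$ via $\pi_0(V)$. *)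

theory Defs
  imports "HOL-Algebra.Group" "HOL-Library.Function_Algebras" "HOL-Library.Product_Plus"
begin

locale crossed_module = G: group G + Mv: group Mv
  for G :: "('g, 'c) monoid_scheme" (structure) and Mv :: "('m, 'd) monoid_scheme" (structure)
  + fixes act :: "'g \<Rightarrow> 'm \<Rightarrow> 'm" and mu :: "'m \<Rightarrow> 'g"
  assumes act_closed: "\<lbrakk>g \<in> carrier G; m \<in> carrier Mv\<rbrakk> \<Longrightarrow> act g m \<in> carrier Mv"
    and act_hom: "\<lbrakk>g \<in> carrier G; m \<in> carrier Mv; n \<in> carrier Mv\<rbrakk>
                  \<Longrightarrow> act g (m \<otimes>\<^bsub>Mv\<^esub> n) = act g m \<otimes>\<^bsub>Mv\<^esub> act g n"
    and act_one: "m \<in> carrier Mv \<Longrightarrow> act \<one>\<^bsub>G\<^esub> m = m"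
    and act_mult: "\<lbrakk>g \<in> carrier G; h \<in> carrier G; m \<in> carrier Mv\<rbrakk>
                  \<Longrightarrow> act (g \<otimes>\<^bsub>G\<^esub> h) m = act g (act h m)"
    and mu_hom: "mu \<in> hom Mv G"
    and mu_equivariant: "\<lbrakk>g \<in> carrier G; m \<in> carrier Mv\<rbrakk>
                  \<Longrightarrow> mu (act g m) = g \<otimes>\<^bsub>G\<^esub> mu m \<otimes>\<^bsub>G\<^esub> inv\<^bsub>G\<^esub> g"
    and peiffer: "\<lbrakk>n \<in> carrier Mv; m \<in> carrier Mv\<rbrakk>
                  \<Longrightarrow> act (mu n) m = n \<otimes>\<^bsub>Mv\<^esub> m \<otimes>\<^bsub>Mv\<^esub> inv\<^bsub>Mv\<^esub> n"

text \<open>An abelian pi_0(V)-module, i.e. an abelian group (the type 'a) with a left action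
  ma of G_V by additive maps that is trivial on mu(M_V) (hence factors through
  pi_0(V) = G_V / mu(M_V)); ma g x is \<bar>g\<bar> . x.\<close>
definition pi0_module ::
  "('g, 'c) monoid_scheme \<Rightarrow> ('m, 'd) monoid_scheme \<Rightarrow> ('m \<Rightarrow> 'g) \<Rightarrow> ('g \<Rightarrow> 'a::ab_group_add \<Rightarrow> 'a) \<Rightarrow> bool"
  where "pi0_module G Mv mu ma \<longleftrightarrow>
    (\<forall>g\<in>carrier G. \<forall>x y. ma g (x + y) = ma g x + ma g y) \<and>
    (\<forall>x. ma \<one>\<^bsub>G\<^esub> x = x) \<and>
    (\<forall>g\<in>carrier G. \<forall>h\<in>carrier G. \<forall>x. ma (g \<otimes>\<^bsub>G\<^esub> h) x = ma g (ma h x)) \<and>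
    (\<forall>m\<in>carrier Mv. \<forall>x. ma (mu m) x = x)"

text \<open>Cochains are maps on the carriers; as HOL functions they are taken to be 0 outside
  the carriers (extensional), so that Map(X, M) is represented faithfully.\<close>

definition Z2V ::
  "('g, 'c) monoid_scheme \<Rightarrow> ('m, 'd) monoid_scheme \<Rightarrow> ('g \<Rightarrow> 'm \<Rightarrow> 'm) \<Rightarrow> ('m \<Rightarrow> 'g)
   \<Rightarrow> ('g \<Rightarrow> 'a::ab_group_add \<Rightarrow> 'a) \<Rightarrow> ('m \<Rightarrow> 'g \<Rightarrow> 'g \<Rightarrow> 'a) set"
  where "Z2V G Mv act mu ma = {c.
    (\<forall>m h g. \<not> (m \<in> carrier Mv \<and> h \<in> carrier G \<and> g \<in> carrier G) \<longrightarrow> c m h g = 0) \<and>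
    (\<forall>p\<in>carrier Mv. \<forall>n\<in>carrier Mv. \<forall>k\<in>carrier G. \<forall>m\<in>carrier Mv. \<forall>h\<in>carrier G. \<forall>g\<in>carrier G.
       c p (mu n \<otimes>\<^bsub>G\<^esub> k) (mu m \<otimes>\<^bsub>G\<^esub> h) - c (p \<otimes>\<^bsub>Mv\<^esub> n) k (h \<otimes>\<^bsub>G\<^esub> g)
       + c (n \<otimes>\<^bsub>Mv\<^esub> act k m) (k \<otimes>\<^bsub>G\<^esub> h) g - ma k (c m h g) = 0)}"

definition Z2G ::
  "('g, 'c) monoid_scheme \<Rightarrow> ('g \<Rightarrow> 'a::ab_group_add \<Rightarrow> 'a) \<Rightarrow> ('g \<Rightarrow> 'g \<Rightarrow> 'a) set"
  where "Z2G G ma = {c.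
    (\<forall>h g. \<not> (h \<in> carrier G \<and> g \<in> carrier G) \<longrightarrow> c h g = 0) \<and>
    (\<forall>r\<in>carrier G. \<forall>q\<in>carrier G. \<forall>p\<in>carrier G.
       c r q - c r (q \<otimes>\<^bsub>G\<^esub> p) + c (r \<otimes>\<^bsub>G\<^esub> q) p - ma r (c q p) = 0)}"

definition pairs_set ::
  "('g, 'c) monoid_scheme \<Rightarrow> ('m, 'd) monoid_scheme \<Rightarrow> ('g \<Rightarrow> 'm \<Rightarrow> 'm) \<Rightarrow> ('m \<Rightarrow> 'g)
   \<Rightarrow> ('g \<Rightarrow> 'a::ab_group_add \<Rightarrow> 'a) \<Rightarrow> (('m \<Rightarrow> 'a) \<times> ('g \<Rightarrow> 'g \<Rightarrow> 'a)) set"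
  where "pairs_set G Mv act mu ma = {(c1, z0).
    (\<forall>m. m \<notin> carrier Mv \<longrightarrow> c1 m = 0) \<and> z0 \<in> Z2G G ma \<and>
    (\<forall>m\<in>carrier Mv. \<forall>n\<in>carrier Mv.
       c1 (n \<otimes>\<^bsub>Mv\<^esub> m) = c1 n + c1 m - z0 (mu n) (mu m)) \<and>
    (\<forall>m\<in>carrier Mv. \<forall>g\<in>carrier G.
       c1 (act g m) = ma g (c1 m) + z0 (mu (act g m)) g - z0 g (mu m))}"

definition add_grp :: "'a::ab_group_add set \<Rightarrow> 'a monoid"
  where "add_grp S = \<lparr>carrier = S, mult = (+), one = 0\<rparr>"

definition restr_map ::
  "('g, 'c) monoid_scheme \<Rightarrow> ('m, 'd) monoid_scheme \<Rightarrow> ('m \<Rightarrow> 'g \<Rightarrow> 'g \<Rightarrow> 'a)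
   \<Rightarrow> ('m \<Rightarrow> 'a) \<times> ('g \<Rightarrow> 'g \<Rightarrow> 'a)"
  where "restr_map G Mv z = ((\<lambda>m. z m \<one>\<^bsub>G\<^esub> \<one>\<^bsub>G\<^esub>), (\<lambda>h g. z \<one>\<^bsub>Mv\<^esub> h g))"

end

theory Submission
  imports Defs
begin

text \<open>
  Every 2-cocycle z of the crossed module V is determined by its module part
  z_M and its group part z_G through the normal form
     z(n, h, g) = z_M(n) - z_G(mu n, h) + z_G(h, g),
  which is read off from two special instances of the cocycle identity.  Conversely, for a
  pair (c1, z0) satisfying the two compatibility conditions, the right-hand side of the
  normal form (with c1, z0 in place of z_M, z_G) is a cocycle: its coboundary is a signed sum
  of six group coboundaries of z0.
\<close>

lemma add_grp_comm_group:
  fixes S :: "'a::ab_group_add set"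
  assumes zero: "0 \<in> S" and diff: "\<And>x y. x \<in> S \<Longrightarrow> y \<in> S \<Longrightarrow> x - y \<in> S"
  shows "comm_group (add_grp S)"
proof -
  have neg: "- x \<in> S" if "x \<in> S" for x
    using diff[OF zero that] by simp
  have add: "x + y \<in> S" if "x \<in> S" "y \<in> S" for x y
    using diff[OF that(1) neg[OF that(2)]] by simp
  show ?thesis
    by (rule comm_groupI)
       (use zero add neg in \<open>auto simp: add_grp_def add.assoc add.commute intro!: bexI[where x="- _"]\<close>)
qed

lemma additive_iso_onto_image:
  fixes f :: "'a::ab_group_add \<Rightarrow> 'b::ab_group_add"
  assumes zero: "0 \<in> S" and diff: "\<And>x y. x \<in> S \<Longrightarrow> y \<in> S \<Longrightarrow> x - y \<in> S"
    and additive: "\<And>x y. f (x + y) = f x + f y"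
    and inj: "inj_on f S" and image: "f ` S = T"
  shows "comm_group (add_grp T) \<and> f \<in> iso (add_grp S) (add_grp T)"
proof
  have f_diff: "f (x - y) = f x - f y" for x y
    using additive[of "x - y" y] by (simp add: eq_diff_eq)
  show "comm_group (add_grp T)"
  proof (rule add_grp_comm_group)
    have "f 0 = 0"
      using f_diff[of 0 0] by simp
    then show "0 \<in> T"
      using image zero by (metis image_eqI)
  next
    fix u v assume "u \<in> T" "v \<in> T"
    then obtain x y where "x \<in> S" "y \<in> S" "u = f x" "v = f y"
      using image by blast
    then show "u - v \<in> T"
      using image diff f_diff by (metis image_eqI)
  qed
  have "f \<in> hom (add_grp S) (add_grp T)"
    using image additive by (auto simp: hom_def add_grp_def)
  moreover have "bij_betw f S T"
    using inj image by (simp add: bij_betw_def)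
  ultimately show "f \<in> iso (add_grp S) (add_grp T)"
    by (simp add: iso_def add_grp_def)
qed


locale crossed_module_with_module = crossed_module G Mv act mu
  for G :: "('g, 'c) monoid_scheme" (structure) and Mv :: "('m, 'd) monoid_scheme" (structure)
  and act mu +
  fixes ma :: "'g \<Rightarrow> 'a::ab_group_add \<Rightarrow> 'a"
  assumes pi0: "pi0_module G Mv mu ma"
begin

sublocale mu: group_hom Mv G mu
  by (simp add: group_hom_def group_hom_axioms_def mu_hom G.group_axioms Mv.group_axioms)

lemma ma_add: "g \<in> carrier G \<Longrightarrow> ma g (x + y) = ma g x + ma g y"
  using pi0 by (simp add: pi0_module_def)

lemma ma_diff: "g \<in> carrier G \<Longrightarrow> ma g (x - y) = ma g x - ma g y"
  using ma_add[of g "x - y" y] by (simp add: eq_diff_eq)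

lemma ma_one: "ma \<one> x = x"
  using pi0 by (simp add: pi0_module_def)

lemma ma_mu: "m \<in> carrier Mv \<Longrightarrow> ma (mu m) x = x"
  using pi0 by (simp add: pi0_module_def)

lemma act_one_right: "k \<in> carrier G \<Longrightarrow> act k \<one>\<^bsub>Mv\<^esub> = \<one>\<^bsub>Mv\<^esub>"
  using act_hom[of k "\<one>\<^bsub>Mv\<^esub>" "\<one>\<^bsub>Mv\<^esub>"] act_closed[of k "\<one>\<^bsub>Mv\<^esub>"]
  by (metis Mv.l_cancel_one Mv.one_closed Mv.r_one)

lemma mu_act_comm: "k \<in> carrier G \<Longrightarrow> m \<in> carrier Mv \<Longrightarrow> mu (act k m) \<otimes> k = k \<otimes> mu m"
  by (simp add: mu_equivariant G.m_assoc)

definition d_grp :: "('g \<Rightarrow> 'g \<Rightarrow> 'a) \<Rightarrow> 'g \<Rightarrow> 'g \<Rightarrow> 'g \<Rightarrow> 'a" where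
  "d_grp c r q p = c r q - c r (q \<otimes> p) + c (r \<otimes> q) p - ma r (c q p)"

definition d_cm :: "('m \<Rightarrow> 'g \<Rightarrow> 'g \<Rightarrow> 'a) \<Rightarrow> 'm \<Rightarrow> 'm \<Rightarrow> 'g \<Rightarrow> 'm \<Rightarrow> 'g \<Rightarrow> 'g \<Rightarrow> 'a" where
  "d_cm c p n k m h g = c p (mu n \<otimes> k) (mu m \<otimes> h) - c (p \<otimes>\<^bsub>Mv\<^esub> n) k (h \<otimes> g)
     + c (n \<otimes>\<^bsub>Mv\<^esub> act k m) (k \<otimes> h) g - ma k (c m h g)"

lemma Z2G_iff: "z0 \<in> Z2G G ma \<longleftrightarrow>
    (\<forall>h g. \<not> (h \<in> carrier G \<and> g \<in> carrier G) \<longrightarrow> z0 h g = 0) \<and>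
    (\<forall>r\<in>carrier G. \<forall>q\<in>carrier G. \<forall>p\<in>carrier G. d_grp z0 r q p = 0)"
  by (simp add: Z2G_def d_grp_def)

lemma Z2V_iff: "z \<in> Z2V G Mv act mu ma \<longleftrightarrow>
    (\<forall>m h g. \<not> (m \<in> carrier Mv \<and> h \<in> carrier G \<and> g \<in> carrier G) \<longrightarrow> z m h g = 0) \<and>
    (\<forall>p\<in>carrier Mv. \<forall>n\<in>carrier Mv. \<forall>k\<in>carrier G. \<forall>m\<in>carrier Mv. \<forall>h\<in>carrier G.
       \<forall>g\<in>carrier G. d_cm z p n k m h g = 0)"
  by (simp add: Z2V_def d_cm_def)

lemma Z2G_cocycle:
  "z0 \<in> Z2G G ma \<Longrightarrow> r \<in> carrier G \<Longrightarrow> q \<in> carrier G \<Longrightarrow> p \<in> carrier G \<Longrightarrow> d_grp z0 r q p = 0"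
  by (simp add: Z2G_iff)

lemma Z2G_outside: "z0 \<in> Z2G G ma \<Longrightarrow> \<not> (h \<in> carrier G \<and> g \<in> carrier G) \<Longrightarrow> z0 h g = 0"
  by (simp add: Z2G_iff)

lemma Z2V_cocycle:
  "z \<in> Z2V G Mv act mu ma \<Longrightarrow> p \<in> carrier Mv \<Longrightarrow> n \<in> carrier Mv \<Longrightarrow> k \<in> carrier G \<Longrightarrow>
   m \<in> carrier Mv \<Longrightarrow> h \<in> carrier G \<Longrightarrow> g \<in> carrier G \<Longrightarrow> d_cm z p n k m h g = 0"
  by (simp add: Z2V_iff)

lemma Z2V_outside:
  "z \<in> Z2V G Mv act mu ma \<Longrightarrow> \<not> (m \<in> carrier Mv \<and> h \<in> carrier G \<and> g \<in> carrier G) \<Longrightarrow> z m h g = 0"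
  by (simp add: Z2V_iff)

lemma d_cm_diff: "k \<in> carrier G \<Longrightarrow> d_cm (x - y) p n k m h g = d_cm x p n k m h g - d_cm y p n k m h g"
  by (simp add: d_cm_def ma_diff algebra_simps)

lemma Z2V_zero: "0 \<in> Z2V G Mv act mu ma"
  using ma_diff[of _ 0 0] by (simp add: Z2V_iff d_cm_def)

lemma Z2V_diff:
  "x \<in> Z2V G Mv act mu ma \<Longrightarrow> y \<in> Z2V G Mv act mu ma \<Longrightarrow> x - y \<in> Z2V G Mv act mu ma"
  by (simp add: Z2V_iff d_cm_diff)

lemma Z2G_one_left: "z0 \<in> Z2G G ma \<Longrightarrow> h \<in> carrier G \<Longrightarrow> z0 \<one> h = z0 \<one> \<one>"
  using Z2G_cocycle[of z0 \<one> \<one> h] by (simp add: d_grp_def ma_one)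

lemma Z2G_one_right: "z0 \<in> Z2G G ma \<Longrightarrow> h \<in> carrier G \<Longrightarrow> z0 h \<one> = ma h (z0 \<one> \<one>)"
  using Z2G_cocycle[of z0 h \<one> \<one>] by (simp add: d_grp_def algebra_simps)

subsection \<open>The normal form of a crossed-module cocycle\<close>

text \<open>Instance (n, 1, 1, 1, 1, g) of the cocycle identity: z(n, 1, g) does not depend on g.\<close>
lemma Z2V_one_any:
  "z \<in> Z2V G Mv act mu ma \<Longrightarrow> n \<in> carrier Mv \<Longrightarrow> g \<in> carrier G \<Longrightarrow> z n \<one> g = z n \<one> \<one>"
  using Z2V_cocycle[of z n "\<one>\<^bsub>Mv\<^esub>" \<one> "\<one>\<^bsub>Mv\<^esub>" \<one> g] by (simp add: d_cm_def act_one ma_one)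

text \<open>Instance (1, n, 1, 1, h, g) then gives the normal form in terms of z_M and z_G.\<close>
lemma Z2V_normal_form:
  assumes "z \<in> Z2V G Mv act mu ma" "n \<in> carrier Mv" "h \<in> carrier G" "g \<in> carrier G"
  shows "z n h g = z n \<one> \<one> - z \<one>\<^bsub>Mv\<^esub> (mu n) h + z \<one>\<^bsub>Mv\<^esub> h g"
  using assms Z2V_cocycle[of z "\<one>\<^bsub>Mv\<^esub>" n \<one> "\<one>\<^bsub>Mv\<^esub>" h g] Z2V_one_any[of z n "h \<otimes> g"]
  by (simp add: d_cm_def act_one ma_one algebra_simps)

lemma restr_map_inj: "inj_on (restr_map G Mv) (Z2V G Mv act mu ma)"
proof (rule inj_onI, intro ext)
  fix z z' m h g
  assume z: "z \<in> Z2V G Mv act mu ma" and z': "z' \<in> Z2V G Mv act mu ma"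
    and "restr_map G Mv z = restr_map G Mv z'"
  then have "z n \<one> \<one> = z' n \<one> \<one>" "z \<one>\<^bsub>Mv\<^esub> h' g' = z' \<one>\<^bsub>Mv\<^esub> h' g'" for n h' g'
    by (simp_all add: restr_map_def fun_eq_iff)
  then show "z m h g = z' m h g"
    using Z2V_normal_form[OF z] Z2V_normal_form[OF z'] Z2V_outside[OF z] Z2V_outside[OF z']
    by metis
qed

text \<open>The group part of a cocycle is a group cocycle (instances with p = n = m = 1).\<close>
lemma group_part_Z2G: "z \<in> Z2V G Mv act mu ma \<Longrightarrow> (\<lambda>h g. z \<one>\<^bsub>Mv\<^esub> h g) \<in> Z2G G ma"
  unfolding Z2G_iff
  using Z2V_outside[of z] Z2V_cocycle[of z "\<one>\<^bsub>Mv\<^esub>" "\<one>\<^bsub>Mv\<^esub>" _ "\<one>\<^bsub>Mv\<^esub>"]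
  by (auto simp: d_cm_def d_grp_def act_one_right)

text \<open>The module part satisfies the multiplicativity condition (instance (n, m, 1, 1, 1, 1)).\<close>
lemma module_part_mult:
  assumes z: "z \<in> Z2V G Mv act mu ma" and m: "m \<in> carrier Mv" and n: "n \<in> carrier Mv"
  shows "z (n \<otimes>\<^bsub>Mv\<^esub> m) \<one> \<one> = z n \<one> \<one> + z m \<one> \<one> - z \<one>\<^bsub>Mv\<^esub> (mu n) (mu m)"
proof -
  have "d_cm z n m \<one> \<one>\<^bsub>Mv\<^esub> \<one> \<one> = 0"
    using Z2V_cocycle[OF z n m] by simp
  then have "z (n \<otimes>\<^bsub>Mv\<^esub> m) \<one> \<one> = z n (mu m) \<one> + z m \<one> \<one> - z \<one>\<^bsub>Mv\<^esub> \<one> \<one>"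
    using m n by (simp add: d_cm_def act_one ma_one algebra_simps)
  also have "z n (mu m) \<one> = z n \<one> \<one> - z \<one>\<^bsub>Mv\<^esub> (mu n) (mu m) + z \<one>\<^bsub>Mv\<^esub> (mu m) \<one>"
    using Z2V_normal_form[OF z n, of "mu m" \<one>] m by simp
  also have "z \<one>\<^bsub>Mv\<^esub> (mu m) \<one> = z \<one>\<^bsub>Mv\<^esub> \<one> \<one>"
    using Z2G_one_right[OF group_part_Z2G[OF z], of "mu m"] m by (simp add: ma_mu)
  finally show ?thesis
    by (simp add: algebra_simps)
qed

text \<open>The module part satisfies the equivariance condition (instance (1, 1, g, m, 1, 1)).\<close>
lemma module_part_act:
  assumes z: "z \<in> Z2V G Mv act mu ma" and m: "m \<in> carrier Mv" and g: "g \<in> carrier G"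
  shows "z (act g m) \<one> \<one> = ma g (z m \<one> \<one>) + z \<one>\<^bsub>Mv\<^esub> (mu (act g m)) g - z \<one>\<^bsub>Mv\<^esub> g (mu m)"
proof -
  have "d_cm z \<one>\<^bsub>Mv\<^esub> \<one>\<^bsub>Mv\<^esub> g m \<one> \<one> = 0"
    using Z2V_cocycle[OF z _ _ g m] by simp
  moreover have "z (act g m) g \<one> = z (act g m) \<one> \<one> - z \<one>\<^bsub>Mv\<^esub> (mu (act g m)) g + z \<one>\<^bsub>Mv\<^esub> g \<one>"
    using Z2V_normal_form[OF z, of "act g m" g \<one>] m g act_closed by simp
  ultimately show ?thesis
    using m g act_closed by (simp add: d_cm_def algebra_simps)
qed

lemma restr_map_in_pairs: "z \<in> Z2V G Mv act mu ma \<Longrightarrow> restr_map G Mv z \<in> pairs_set G Mv act mu ma"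
  using Z2V_outside[of z] group_part_Z2G module_part_mult module_part_act
  by (simp add: restr_map_def pairs_set_def)

subsection \<open>Reconstruction of a cocycle from a compatible pair\<close>

text \<open>The cochain given by the normal form, built from a pair (c1, z0).\<close>
definition cocycle_of :: "('m \<Rightarrow> 'a) \<Rightarrow> ('g \<Rightarrow> 'g \<Rightarrow> 'a) \<Rightarrow> 'm \<Rightarrow> 'g \<Rightarrow> 'g \<Rightarrow> 'a" where
  "cocycle_of c1 z0 = (\<lambda>p k g. if p \<in> carrier Mv \<and> k \<in> carrier G \<and> g \<in> carrier G
                               then c1 p - z0 (mu p) k + z0 k g else 0)"

lemma pairs_setD:
  assumes "(c1, z0) \<in> pairs_set G Mv act mu ma"
  shows "z0 \<in> Z2G G ma" "\<And>m. m \<notin> carrier Mv \<Longrightarrow> c1 m = 0"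
    "\<And>m n. m \<in> carrier Mv \<Longrightarrow> n \<in> carrier Mv \<Longrightarrow> c1 (n \<otimes>\<^bsub>Mv\<^esub> m) = c1 n + c1 m - z0 (mu n) (mu m)"
    "\<And>m g. m \<in> carrier Mv \<Longrightarrow> g \<in> carrier G \<Longrightarrow>
       c1 (act g m) = ma g (c1 m) + z0 (mu (act g m)) g - z0 g (mu m)"
  using assms unfolding pairs_set_def by auto

text \<open>Key computation: after expanding with the two compatibility conditions, the coboundary
  of the reconstructed cochain is a signed sum of six group coboundaries of z0, in which the
  actions of elements of mu(M_V) have become trivial.\<close>
lemma d_cm_cocycle_of:
  assumes P: "(c1, z0) \<in> pairs_set G Mv act mu ma"
    and p: "p \<in> carrier Mv" and n: "n \<in> carrier Mv" and k: "k \<in> carrier G"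
    and m: "m \<in> carrier Mv" and h: "h \<in> carrier G" and g: "g \<in> carrier G"
  shows "d_cm (cocycle_of c1 z0) p n k m h g = 0"
proof -
  note z0 = pairs_setD(1)[OF P] and mult = pairs_setD(3)[OF P] and eqv = pairs_setD(4)[OF P]
  define a b y x where "a = mu p" and "b = mu n" and "y = mu m" and "x = mu (act k m)"
  have km: "act k m \<in> carrier Mv" using act_closed k m by simp
  have ab: "a \<in> carrier G" "b \<in> carrier G" "y \<in> carrier G" "x \<in> carrier G"
    using p n m km by (simp_all add: a_def b_def y_def x_def)
  have xk: "x \<otimes> k = k \<otimes> y"
    using mu_act_comm k m by (simp add: x_def y_def)
  have xkh: "x \<otimes> (k \<otimes> h) = k \<otimes> (y \<otimes> h)"
    using xk ab k h by (metis G.m_assoc)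
  have expand: "d_cm (cocycle_of c1 z0) p n k m h g =
      (c1 p - z0 a (b \<otimes> k) + z0 (b \<otimes> k) (y \<otimes> h))
    - ((c1 p + c1 n - z0 a b) - z0 (a \<otimes> b) k + z0 k (h \<otimes> g))
    + ((c1 n + (ma k (c1 m) + z0 x k - z0 k y) - z0 b x) - z0 (b \<otimes> x) (k \<otimes> h) + z0 (k \<otimes> h) g)
    - (ma k (c1 m) - ma k (z0 y h) + ma k (z0 h g))"
    using p n k m h g ab km
    by (simp add: d_cm_def cocycle_of_def a_def b_def x_def y_def mult eqv ma_add ma_diff)
  also have "\<dots> = d_grp z0 a b k + d_grp z0 k h g + d_grp z0 x k h + d_grp z0 b k (y \<otimes> h)
                 - d_grp z0 k y h - d_grp z0 b x (k \<otimes> h)"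
    using xk xkh by (simp add: d_grp_def a_def b_def x_def ma_mu p n km algebra_simps)
  also have "\<dots> = 0"
    using Z2G_cocycle[OF z0] ab k h g by (simp add: G.m_closed)
  finally show ?thesis .
qed

lemma cocycle_of_Z2V:
  "(c1, z0) \<in> pairs_set G Mv act mu ma \<Longrightarrow> cocycle_of c1 z0 \<in> Z2V G Mv act mu ma"
  using d_cm_cocycle_of by (auto simp: Z2V_iff cocycle_of_def)

lemma restr_map_cocycle_of:
  assumes P: "(c1, z0) \<in> pairs_set G Mv act mu ma"
  shows "restr_map G Mv (cocycle_of c1 z0) = (c1, z0)"
proof -
  note z0 = pairs_setD(1)[OF P]
  have c1_one: "c1 \<one>\<^bsub>Mv\<^esub> = z0 \<one> \<one>"
    using pairs_setD(3)[OF P, of "\<one>\<^bsub>Mv\<^esub>" "\<one>\<^bsub>Mv\<^esub>"] by simp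
  have "cocycle_of c1 z0 m \<one> \<one> = c1 m" for m
    using Z2G_one_right[OF z0, of "mu m"] pairs_setD(2)[OF P, of m]
    by (auto simp: cocycle_of_def ma_mu)
  moreover have "cocycle_of c1 z0 \<one>\<^bsub>Mv\<^esub> h g = z0 h g" for h g
    using Z2G_one_left[OF z0, of h] Z2G_outside[OF z0, of h g] c1_one
    by (auto simp: cocycle_of_def)
  ultimately show ?thesis
    by (simp add: restr_map_def fun_eq_iff)
qed

lemma restr_map_image: "restr_map G Mv ` Z2V G Mv act mu ma = pairs_set G Mv act mu ma"
proof
  show "restr_map G Mv ` Z2V G Mv act mu ma \<subseteq> pairs_set G Mv act mu ma"
    using restr_map_in_pairs by blast
  show "pairs_set G Mv act mu ma \<subseteq> restr_map G Mv ` Z2V G Mv act mu ma"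
  proof
    fix q assume q: "q \<in> pairs_set G Mv act mu ma"
    obtain c1 z0 where qq: "q = (c1, z0)" by (cases q)
    show "q \<in> restr_map G Mv ` Z2V G Mv act mu ma"
      using cocycle_of_Z2V restr_map_cocycle_of q unfolding qq by (metis image_eqI)
  qed
qed

end

lemma restr_map_additive: "restr_map G Mv (x + y) = restr_map G Mv x + restr_map G Mv y"
  by (simp add: restr_map_def fun_eq_iff)

theorem corollary3p12:
  fixes G :: "('g, 'c) monoid_scheme" and Mv :: "('m, 'd) monoid_scheme"
    and act :: "'g \<Rightarrow> 'm \<Rightarrow> 'm" and mu :: "'m \<Rightarrow> 'g"
    and ma :: "'g \<Rightarrow> 'a::ab_group_add \<Rightarrow> 'a"
  assumes "crossed_module G Mv act mu"
    and "pi0_module G Mv mu ma"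
  shows "comm_group (add_grp (Z2V G Mv act mu ma))
       \<and> comm_group (add_grp (pairs_set G Mv act mu ma))
       \<and> restr_map G Mv \<in> iso (add_grp (Z2V G Mv act mu ma)) (add_grp (pairs_set G Mv act mu ma))"
proof -
  interpret crossed_module_with_module G Mv act mu ma
    using assms by (simp add: crossed_module_with_module_def crossed_module_with_module_axioms_def)
  have "comm_group (add_grp (Z2V G Mv act mu ma))"
    using Z2V_zero Z2V_diff by (rule add_grp_comm_group)
  moreover have "comm_group (add_grp (pairs_set G Mv act mu ma))
      \<and> restr_map G Mv \<in> iso (add_grp (Z2V G Mv act mu ma)) (add_grp (pairs_set G Mv act mu ma))"
    using Z2V_zero Z2V_diff restr_map_additive restr_map_inj restr_map_image
    by (rule additive_iso_onto_image)
  ultimately show ?thesis by blast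
qed

end
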